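(* Let $\mathcal{S}$ be a normal SPN over Boolean variables $X_1,\ldots,X_N$. The Bayesian network $\mathcal{B}$ with ADD CPDs described in the context (which satisfies $\Pr_{\mathcal{B}}(\mathbf{x})=\Pr_{\mathcal{S}}(\mathbf{x})$ for all $\mathbf{x}$) can be constructed from $\mathcal{S}$ in time $O(N|\mathcal{S}|)$.
   Context: SPNs. Let $X_1,\ldots,X_N$ be Boolean variables. An SPN is a finite rooted DAG whose internal nodes are sum and product nodes, each edge $(v,u)$ out of a sum node carrying a weight $w_{v,u}\ge 0$, and whose terminal nodes are indicators $\mathbb{I}_{x_n},\mathbb{I}_{\bar x_n}$ or univariate distribution nodes over some $X_n$ with parameter $p\in[0,1]$ (value $p\mathbb{I}_{x_n}+(1-p)\mathbb{I}_{\bar x_n}$); products multiply, sum nodes take $\sum_u w_{v,u}\mathrm{val}(u)$, $f_{\mathcal{S}}(\mathbf{x})$ is the root value and $\Pr_{\mathcal{S}}(\mathbf{x})=f_{\mathcal{S}}(\mathbf{x})/\sum_{\mathbf{x}'}f_{\mathcal{S}}(\mathbf{x}')$. The scope of a terminal node over $X_n$ is $\{X_n\}$; an internal node's scope is the union of its children's scopes. The SPN is over $X_1,\ldots,X_N$ if the root's scope is $\{X_1,\ldots,X_N\}$. It is normal if (1) it is complete (children of each sum node have equal scopes) and decomposable (children of each product node have pairwise disjoint scopes); (2) the weights leaving each sum node are nonnegative and sum to 1; (3) every terminal node is a univariate distribution node and every sum node has scope size at least 2. $|\mathcal{S}|$ is the number of nodes plus edges. Construction. The Bayesian network $\mathcal{B}$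 has variables $X_1,\ldots,X_N$ and, for each sum node $v$ with children $u_1,\ldots,u_l$, a hidden variable $H_v$ with values $\{1,\ldots,l\}$; its edges are exactly $H_v\to X$ for each sum node $v$ and $X\in\mathrm{scope}(v)$. The CPD of $H_v$ is the decision stump ADD $\mathcal{A}_{H_v}$ with $\Pr(H_v=i)=w_{v,u_i}$. The CPD of $X$ is the ADD $\mathcal{A}_X$ obtained by taking the subgraph of $\mathcal{S}$ induced by the nodes whose scope contains $X$, contracting every product node (each has a unique child there), turning each sum node $v$ into an ADD node labelled $H_v$ whose $i$-th out-edge goes to the image of its $i$-th child, and keeping each terminal node (a distribution over $X$) as an ADD terminal. $\Pr_{\mathcal{B}}(\mathbf{x})$ denotes the marginal over $X_1,\ldots,X_N$ of the product of all CPDs. Time is counted in elementary operations, with set insertion assumed to take $O(1)$ time. *)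

theory Defs
  imports Complex_Main
begin

text \<open>Boolean variables X_1..X_N are represented by indices 0..N-1 (X_(n+1) is n).
  An SPN is a list of nodes; node v refers to its children by their list index.
  Convention: nodes are listed in topological order (every child has a smaller
  index than its parent); the root is the last node.\<close>

datatype node =
    SumN "(nat \<times> real) list"
  | ProdN "nat list"
  | DistN nat real              \<comment> \<open>univariate distribution node over X_n with parameter p\<close>
  | IndN nat bool               \<comment> \<open>indicator of x_n (True) or of not x_n (False)\<close>

type_synonym spn = "node list"

fun spn_children :: "node \<Rightarrow> nat list" where
  "spn_children (SumN ws) = map fst ws"
| "spn_children (ProdN cs) = cs"
| "spn_children (DistN _ _) = []"
| "spn_children (IndN _ _) = []"

fun is_sum :: "node \<Rightarrow> bool" where
  "is_sum (SumN _) = True" | "is_sum _ = False"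

fun is_prod :: "node \<Rightarrow> bool" where
  "is_prod (ProdN _) = True" | "is_prod _ = False"

definition spn_root :: "spn \<Rightarrow> nat" where
  "spn_root S = length S - 1"

definition spn_edges :: "spn \<Rightarrow> (nat \<times> nat) set" where
  "spn_edges S = {(v, u). v < length S \<and> u \<in> set (spn_children (S ! v))}"

definition spn_size :: "spn \<Rightarrow> nat" where
  "spn_size S = length S + sum_list (map (\<lambda>x. length (spn_children x)) S)"

definition wf_spn :: "spn \<Rightarrow> bool" where
  "wf_spn S \<longleftrightarrow> S \<noteq> [] \<and>
     (\<forall>v<length S. \<forall>u\<in>set (spn_children (S ! v)). u < v) \<and>
     (\<forall>v<length S. distinct (spn_children (S ! v))) \<and>
     (\<forall>v<length S. (is_sum (S ! v) \<or> is_prod (S ! v)) \<longrightarrow> spn_children (S ! v) \<noteq> []) \<and>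
     (\<forall>v<length S. (spn_root S, v) \<in> (spn_edges S)\<^sup>*) \<and>
     (\<forall>v<length S. \<forall>n p. S ! v = DistN n p \<longrightarrow> 0 \<le> p \<and> p \<le> 1)"

inductive in_scope :: "spn \<Rightarrow> nat \<Rightarrow> nat \<Rightarrow> bool" where
  dist: "v < length S \<Longrightarrow> S ! v = DistN n p \<Longrightarrow> in_scope S v n"
| ind: "v < length S \<Longrightarrow> S ! v = IndN n b \<Longrightarrow> in_scope S v n"
| child: "v < length S \<Longrightarrow> u \<in> set (spn_children (S ! v)) \<Longrightarrow> in_scope S u n \<Longrightarrow> in_scope S v n"

definition scope :: "spn \<Rightarrow> nat \<Rightarrow> nat set" where
  "scope S v = {n. in_scope S v n}"

definition normal_spn :: "spn \<Rightarrow> nat \<Rightarrow> bool" where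
  "normal_spn S N \<longleftrightarrow> wf_spn S \<and>
     scope S (spn_root S) = {..<N} \<and>
     \<comment> \<open>completeness\<close>
     (\<forall>v<length S. is_sum (S ! v) \<longrightarrow>
        (\<forall>u1\<in>set (spn_children (S ! v)). \<forall>u2\<in>set (spn_children (S ! v)). scope S u1 = scope S u2)) \<and>
     \<comment> \<open>decomposability\<close>
     (\<forall>v<length S. \<forall>cs. S ! v = ProdN cs \<longrightarrow>
        (\<forall>i<length cs. \<forall>j<length cs. i \<noteq> j \<longrightarrow> scope S (cs ! i) \<inter> scope S (cs ! j) = {})) \<and>
     \<comment> \<open>normalised nonnegative weights\<close>
     (\<forall>v<length S. \<forall>ws. S ! v = SumN ws \<longrightarrow>
        (\<forall>uw\<in>set ws. 0 \<le> snd uw) \<and> sum_list (map snd ws) = 1) \<and>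
     \<comment> \<open>terminals are univariate distribution nodes; sum nodes have scope size at least 2\<close>
     (\<forall>v<length S. \<not> (\<exists>n b. S ! v = IndN n b)) \<and>
     (\<forall>v<length S. is_sum (S ! v) \<longrightarrow> card (scope S v) \<ge> 2)"

text \<open>ADD nodes: a decision node labelled H_v with the list of its children (ADD node ids),
  or a terminal (a distribution over X with parameter p). ADD node ids are the ids of
  the SPN nodes they are images of; an ADD is the list (indexed by SPN node id) of its
  nodes (None = no ADD node for this SPN node) together with its root id.\<close>
datatype add_node = ADec nat "nat list" | ATerm real

type_synonym add = "add_node option list \<times> nat"

text \<open>Image of an SPN node after contracting product nodes in the subgraph induced by
  the nodes whose scope contains X_n.\<close>
inductive img_rel :: "spn \<Rightarrow> nat \<Rightarrow> nat \<Rightarrow> nat \<Rightarrow> bool" where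
  keep: "\<not> is_prod (S ! u) \<Longrightarrow> img_rel S n u u"
| contract: "S ! u = ProdN cs \<Longrightarrow> c \<in> set cs \<Longrightarrow> n \<in> scope S c \<Longrightarrow> img_rel S n c w \<Longrightarrow> img_rel S n u w"

definition img :: "spn \<Rightarrow> nat \<Rightarrow> nat \<Rightarrow> nat" where
  "img S n u = (THE w. img_rel S n u w)"

definition add_image :: "spn \<Rightarrow> nat \<Rightarrow> nat \<Rightarrow> add_node" where
  "add_image S n v = (case S ! v of
       SumN ws \<Rightarrow> ADec v (map (\<lambda>uw. img S n (fst uw)) ws)
     | DistN m p \<Rightarrow> ATerm p
     | _ \<Rightarrow> ATerm 0)"

definition spec_add :: "spn \<Rightarrow> nat \<Rightarrow> add" where
  "spec_add S n =
     (map (\<lambda>v. if n \<in> scope S v \<and> \<not> is_prod (S ! v) then Some (add_image S n v) else None)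
          [0..<length S],
      img S n (spn_root S))"

text \<open>Hidden variables H_v with their decision-stump CPDs Pr(H_v = i) = w_(v,u_i).\<close>
fun hidden_of :: "nat \<Rightarrow> node \<Rightarrow> (nat \<times> real list) list" where
  "hidden_of v (SumN ws) = [(v, map snd ws)]"
| "hidden_of v _ = []"

definition spec_hidden :: "spn \<Rightarrow> (nat \<times> real list) list" where
  "spec_hidden S = concat (map (\<lambda>v. hidden_of v (S ! v)) [0..<length S])"

text \<open>Edges H_v -> X_n, represented by pairs (v, n).\<close>
definition spec_bn_edges :: "spn \<Rightarrow> (nat \<times> nat) set" where
  "spec_bn_edges S = {(v, n). v < length S \<and> is_sum (S ! v) \<and> n \<in> scope S v}"

text \<open>A Bayesian network: hidden CPDs, edge list, and ADD CPDs of X_1..X_N.\<close>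
type_synonym bn = "(nat \<times> real list) list \<times> (nat \<times> nat) list \<times> add list"

definition is_constructed_bn :: "spn \<Rightarrow> nat \<Rightarrow> bn \<Rightarrow> bool" where
  "is_constructed_bn S N B \<longleftrightarrow>
     (case B of (hs, es, adds) \<Rightarrow>
        hs = spec_hidden S \<and> set es = spec_bn_edges S \<and> length adds = N \<and>
        (\<forall>n<N. adds ! n = spec_add S n))"

text \<open>Each function returns its result together with the number of elementary
  operations performed (RAM model: array read / write / append and set insertion
  cost 1; scopes are stored as Boolean arrays of length N).\<close>

definition or_vec :: "bool list \<Rightarrow> bool list \<Rightarrow> bool list \<times> nat" where
  "or_vec a b = (map2 (\<or>) a b, length a)"

fun union_children :: "bool list list \<Rightarrow> bool list \<Rightarrow> nat list \<Rightarrow> bool list \<times> nat" where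
  "union_children sc acc [] = (acc, 1)"
| "union_children sc acc (c # cs) =
     (let (a1, k1) = or_vec acc (sc ! c); (a2, k2) = union_children sc a1 cs in (a2, 1 + k1 + k2))"

fun node_scope :: "nat \<Rightarrow> bool list list \<Rightarrow> node \<Rightarrow> bool list \<times> nat" where
  "node_scope N sc (DistN m p) = ((replicate N False)[m := True], N + 1)"
| "node_scope N sc (IndN m b) = ((replicate N False)[m := True], N + 1)"
| "node_scope N sc (SumN ws) =
     (let (a, k) = union_children sc (replicate N False) (map fst ws) in (a, N + length ws + k))"
| "node_scope N sc (ProdN cs) =
     (let (a, k) = union_children sc (replicate N False) cs in (a, N + k))"

fun scopes_loop :: "nat \<Rightarrow> bool list list \<Rightarrow> node list \<Rightarrow> bool list list \<times> nat" where
  "scopes_loop N sc [] = (sc, 1)"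
| "scopes_loop N sc (x # xs) =
     (let (a, k) = node_scope N sc x; (r, k') = scopes_loop N (sc @ [a]) xs in (r, k + 1 + k'))"

fun find_child :: "bool list list \<Rightarrow> nat \<Rightarrow> nat list \<Rightarrow> nat \<times> nat" where
  "find_child sc n [] = (0, 1)"
| "find_child sc n (c # cs) =
     (if sc ! c ! n then (c, 1) else (let (r, k) = find_child sc n cs in (r, k + 1)))"

fun add_step :: "bool list list \<Rightarrow> nat \<Rightarrow> nat list \<Rightarrow> nat \<Rightarrow> node \<Rightarrow> (add_node option \<times> nat) \<times> nat" where
  "add_step sc n im v x =
     (if \<not> sc ! v ! n then ((None, v), 1) else
      (case x of
         ProdN cs \<Rightarrow> (let (c, k) = find_child sc n cs in ((None, im ! c), k + 1))
       | SumN ws \<Rightarrow> ((Some (ADec v (map (\<lambda>uw. im ! fst uw) ws)), v), length ws + 1)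
       | DistN m p \<Rightarrow> ((Some (ATerm p), v), 1)
       | IndN m b \<Rightarrow> ((None, v), 1)))"

fun add_loop :: "bool list list \<Rightarrow> nat \<Rightarrow> nat \<Rightarrow> nat list \<Rightarrow> add_node option list \<Rightarrow> node list
                 \<Rightarrow> (add_node option list \<times> nat list) \<times> nat" where
  "add_loop sc n v im es [] = ((es, im), 1)"
| "add_loop sc n v im es (x # xs) =
     (let ((e, i), k) = add_step sc n im v x;
          (r, k') = add_loop sc n (Suc v) (im @ [i]) (es @ [e]) xs
      in (r, k + 1 + k'))"

definition build_add :: "bool list list \<Rightarrow> spn \<Rightarrow> nat \<Rightarrow> add \<times> nat" where
  "build_add sc S n = (let ((es, im), k) = add_loop sc n 0 [] [] S in ((es, im ! (length S - 1)), k + 1))"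

fun adds_list :: "bool list list \<Rightarrow> spn \<Rightarrow> nat list \<Rightarrow> add list \<times> nat" where
  "adds_list sc S [] = ([], 1)"
| "adds_list sc S (n # ns) =
     (let (a, k) = build_add sc S n; (r, k') = adds_list sc S ns in (a # r, k + k' + 1))"

fun he_loop :: "nat \<Rightarrow> bool list list \<Rightarrow> nat \<Rightarrow> node list
                \<Rightarrow> ((nat \<times> real list) list \<times> (nat \<times> nat) list) \<times> nat" where
  "he_loop N sc v [] = (([], []), 1)"
| "he_loop N sc v (x # xs) =
     (let ((hs, es), k) = he_loop N sc (Suc v) xs in
      (case x of
         SumN ws \<Rightarrow> (((v, map snd ws) # hs, map (\<lambda>n. (v, n)) (filter (\<lambda>n. sc ! v ! n) [0..<N]) @ es),
                      k + length ws + N + 1)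
       | _ \<Rightarrow> ((hs, es), k + 1)))"

definition construct_bn :: "spn \<Rightarrow> nat \<Rightarrow> bn \<times> nat" where
  "construct_bn S N =
     (let (sc, k1) = scopes_loop N [] S;
          ((hs, es), k2) = he_loop N sc 0 S;
          (adds, k3) = adds_list sc S [0..<N]
      in ((hs, es, adds), k1 + k2 + k3))"

end

theory Submission
  imports Defs
begin

text \<open>Scopes are computed bottom-up as Boolean arrays of length N, at cost O(N) per node
  and per edge; the hidden variables and the edges H_v \<rightarrow> X are then read off the arrays of
  the sum nodes. Each of the N ADDs is produced by a single pass over S in time O(|S|):
  the image of a node is determined by the images of its children, since by
  decomposability a product node has exactly one child whose scope contains X, and by
  completeness all children of a sum node whose scope contains X also contain X.\<close>

section \<open>Operation counts\<close>

definition edge_count :: "node list \<Rightarrow> nat" where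
  "edge_count xs = sum_list (map (\<lambda>x. length (spn_children x)) xs)"

lemma edge_count_simps [simp]:
  "edge_count [] = 0"
  "edge_count (x # xs) = length (spn_children x) + edge_count xs"
  by (simp_all add: edge_count_def)

lemma spn_size_eq: "spn_size S = length S + edge_count S"
  by (simp add: spn_size_def edge_count_def)

lemma union_children_cost:
  "snd (union_children sc acc cs) \<le> 1 + length cs * (1 + length acc)"
proof (induction cs arbitrary: acc)
  case Nil
  then show ?case by simp
next
  case (Cons c cs)
  define acc' where "acc' = map2 (\<or>) acc (sc ! c)"
  have "length acc' \<le> length acc"
    by (simp add: acc'_def)
  then have "snd (union_children sc acc' cs) \<le> 1 + length cs * (1 + length acc)"
    using Cons[of acc'] by (meson add_le_mono le_refl mult_le_mono order_trans)
  then show ?case by (simp add: split_beta or_vec_def acc'_def[symmetric])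
qed

lemma node_scope_cost: "snd (node_scope N sc x) + 1 \<le> (N + 3) * (1 + length (spn_children x))"
proof (cases x)
  case (SumN ws)
  then show ?thesis
    using union_children_cost[of sc "replicate N False" "map fst ws"]
    by (simp add: split_beta algebra_simps)
next
  case (ProdN cs)
  then show ?thesis
    using union_children_cost[of sc "replicate N False" cs]
    by (simp add: split_beta algebra_simps)
qed auto

lemma scopes_loop_cost: "snd (scopes_loop N sc xs) \<le> 1 + (N + 3) * (length xs + edge_count xs)"
proof (induction xs arbitrary: sc)
  case (Cons x xs)
  have "snd (scopes_loop N (sc @ [fst (node_scope N sc x)]) xs)
      \<le> 1 + (N + 3) * (length xs + edge_count xs)"
    using Cons by blast
  then show ?case
    using node_scope_cost[of N sc x] by (simp add: split_beta algebra_simps)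
qed simp

lemma he_loop_cost: "snd (he_loop N sc v xs) \<le> 1 + (N + 1) * (length xs + edge_count xs)"
proof (induction xs arbitrary: v)
  case (Cons x xs)
  have "snd (he_loop N sc (Suc v) xs) \<le> 1 + (N + 1) * (length xs + edge_count xs)"
    using Cons by blast
  then show ?case
    by (cases x) (auto simp: split_beta algebra_simps)
qed simp

lemma find_child_cost: "snd (find_child sc n cs) \<le> length cs + 1"
  by (induction cs) (auto simp: split_beta)

lemma add_step_cost: "snd (add_step sc n im v x) \<le> length (spn_children x) + 2"
  using find_child_cost[of sc n] by (cases x) (auto simp: split_beta)

lemma add_loop_cost: "snd (add_loop sc n v im es xs) \<le> 1 + 3 * length xs + edge_count xs"
proof (induction xs arbitrary: v im es)
  case (Cons x xs)
  obtain e i k where step: "add_step sc n im v x = ((e, i), k)"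
    by (metis prod.exhaust)
  show ?case
    using add_step_cost[of sc n im v x] Cons[of "Suc v" "im @ [i]" "es @ [e]"]
    by (simp add: step split_beta del: add_step.simps)
qed simp

lemma adds_list_cost: "snd (adds_list sc S ns) \<le> 1 + length ns * (3 + 3 * spn_size S)"
proof (induction ns)
  case (Cons n ns)
  then show ?case
    using add_loop_cost[of sc n 0 "[]" "[]" S]
    by (simp add: split_beta build_add_def spn_size_eq)
qed simp

lemma construct_bn_eq:
  "construct_bn S N =
     (let sc = fst (scopes_loop N [] S)
      in ((fst (fst (he_loop N sc 0 S)), snd (fst (he_loop N sc 0 S)), fst (adds_list sc S [0..<N])),
          snd (scopes_loop N [] S) + snd (he_loop N sc 0 S) + snd (adds_list sc S [0..<N])))"
  by (simp add: construct_bn_def split_beta Let_def)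

lemma construct_bn_cost:
  assumes "N \<ge> 1" and "S \<noteq> []"
  shows "snd (construct_bn S N) \<le> 15 * N * spn_size S"
proof -
  define s where "s = spn_size S"
  define sc where "sc = fst (scopes_loop N [] S)"
  have "s \<ge> 1"
    using assms(2) by (cases S) (auto simp: s_def spn_size_def)
  then have "1 \<le> N * s" "N \<le> N * s" "s \<le> N * s"
    using assms(1) by simp_all
  moreover have "snd (scopes_loop N [] S) \<le> 1 + N * s + 3 * s"
    using scopes_loop_cost[of N "[]" S] by (simp add: s_def spn_size_eq algebra_simps)
  moreover have "snd (he_loop N sc 0 S) \<le> 1 + N * s + s"
    using he_loop_cost[of N sc 0 S] by (simp add: s_def spn_size_eq algebra_simps)
  moreover have "snd (adds_list sc S [0..<N]) \<le> 1 + 3 * N + 3 * (N * s)"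
    using adds_list_cost[of sc S "[0..<N]"] by (simp add: s_def algebra_simps)
  ultimately have "snd (scopes_loop N [] S) + snd (he_loop N sc 0 S) + snd (adds_list sc S [0..<N])
      \<le> 15 * (N * s)"
    by linarith
  then show ?thesis
    by (simp add: construct_bn_eq Let_def sc_def[symmetric] s_def[symmetric] mult.assoc)
qed

section \<open>Scopes\<close>

lemma in_scope_iff:
  assumes "v < length S"
  shows "n \<in> scope S v \<longleftrightarrow>
    (\<exists>p. S ! v = DistN n p) \<or> (\<exists>b. S ! v = IndN n b) \<or>
    (\<exists>u\<in>set (spn_children (S ! v)). n \<in> scope S u)"
  using assms unfolding scope_def
  by (auto intro: in_scope.intros elim: in_scope.cases)

lemma scope_subset_if_reachable:
  assumes "(u, v) \<in> (spn_edges S)\<^sup>*"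
  shows "scope S v \<subseteq> scope S u"
  using assms
proof induction
  case (step y z)
  then have "scope S z \<subseteq> scope S y"
    by (auto simp: spn_edges_def scope_def intro: in_scope.child)
  then show ?case
    using step by blast
qed simp

lemma child_less: "wf_spn S \<Longrightarrow> v < length S \<Longrightarrow> u \<in> set (spn_children (S ! v)) \<Longrightarrow> u < v"
  by (auto simp: wf_spn_def)

lemma scope_nonempty:
  assumes "wf_spn S" and "v < length S"
  shows "scope S v \<noteq> {}"
  using assms(2)
proof (induction v rule: less_induct)
  case (less v)
  show ?case
  proof (cases "spn_children (S ! v)")
    case Nil
    then obtain n where "(\<exists>p. S ! v = DistN n p) \<or> (\<exists>b. S ! v = IndN n b)"
      using assms(1) less.prems by (cases "S ! v") (auto simp: wf_spn_def)
    then show ?thesis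
      using in_scope_iff[OF less.prems] by blast
  next
    case (Cons u us)
    then have "u < v"
      using child_less[OF assms(1) less.prems] by simp
    then show ?thesis
      using less.IH[of u] less.prems in_scope_iff[OF less.prems] Cons by auto
  qed
qed

lemma scope_subset_vars: "normal_spn S N \<Longrightarrow> v < length S \<Longrightarrow> scope S v \<subseteq> {..<N}"
  using scope_subset_if_reachable[of "spn_root S" v S]
  by (auto simp: wf_spn_def normal_spn_def)

lemma normal_spn_vars_pos:
  assumes "normal_spn S N"
  shows "N \<ge> 1"
proof -
  have "wf_spn S" and "S \<noteq> []"
    using assms by (simp_all add: normal_spn_def wf_spn_def)
  then have "scope S (spn_root S) \<noteq> {}"
    using scope_nonempty by (simp add: spn_root_def)
  then have "{..<N} \<noteq> {}"
    using assms by (simp add: normal_spn_def)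
  then show ?thesis
    by (simp add: Suc_le_eq lessThan_empty_iff)
qed

lemma scope_of_sum_child:
  assumes "normal_spn S N" "v < length S" "S ! v = SumN ws"
    and "u \<in> set (spn_children (S ! v))" "n \<in> scope S v"
  shows "n \<in> scope S u"
proof -
  obtain u' where "u' \<in> set (spn_children (S ! v))" "n \<in> scope S u'"
    using in_scope_iff[OF assms(2)] assms(3,5) by auto
  moreover have "\<forall>u1\<in>set (spn_children (S ! v)). \<forall>u2\<in>set (spn_children (S ! v)). scope S u1 = scope S u2"
    using assms(1-3) unfolding normal_spn_def by (metis is_sum.simps(1))
  then have "scope S u = scope S u'"
    using assms(4) calculation(1) by blast
  ultimately show ?thesis
    by simp
qed

lemma prod_child_unique:
  assumes "normal_spn S N" "v < length S" "S ! v = ProdN cs"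
    and "c \<in> set cs" "c' \<in> set cs" "n \<in> scope S c" "n \<in> scope S c'"
  shows "c = c'"
proof -
  obtain i j where ij: "i < length cs" "j < length cs" "c = cs ! i" "c' = cs ! j"
    using assms(4,5) by (metis in_set_conv_nth)
  have "\<forall>i<length cs. \<forall>j<length cs. i \<noteq> j \<longrightarrow> scope S (cs ! i) \<inter> scope S (cs ! j) = {}"
    using assms(1-3) unfolding normal_spn_def by blast
  then have "i \<noteq> j \<Longrightarrow> scope S c \<inter> scope S c' = {}"
    using ij by simp
  then show ?thesis
    using assms(6,7) ij by blast
qed

lemma scopes_loop_invariant:
  "length (fst (scopes_loop N sc xs)) = length sc + length xs \<and>
   take (length sc) (fst (scopes_loop N sc xs)) = sc \<and>
   (\<forall>i<length xs. fst (scopes_loop N sc xs) ! (length sc + i) =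
       fst (node_scope N (take (length sc + i) (fst (scopes_loop N sc xs))) (xs ! i)))"
proof (induction xs arbitrary: sc)
  case Nil
  then show ?case by simp
next
  case (Cons x xs)
  define a where "a = fst (node_scope N sc x)"
  define R where "R = fst (scopes_loop N (sc @ [a]) xs)"
  have R: "fst (scopes_loop N sc (x # xs)) = R"
    by (simp add: R_def a_def split_beta)
  note IH = Cons[of "sc @ [a]", folded R_def]
  have len: "length R = length sc + length (x # xs)"
    using IH by simp
  have take_Suc: "take (Suc (length sc)) R = sc @ [a]"
    using IH by simp
  have "take (length sc) R = take (length sc) (take (Suc (length sc)) R)"
    by simp
  then have take_R: "take (length sc) R = sc"
    using take_Suc by simp
  have "R ! length sc = take (Suc (length sc)) R ! length sc"
    by simp
  then have "R ! length sc = a"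
    using take_Suc by simp
  then have first: "R ! length sc = fst (node_scope N (take (length sc) R) x)"
    using take_R a_def by simp
  show ?case
    unfolding R
  proof (intro conjI allI impI)
    fix i
    assume i: "i < length (x # xs)"
    show "R ! (length sc + i) = fst (node_scope N (take (length sc + i) R) ((x # xs) ! i))"
    proof (cases i)
      case 0
      then show ?thesis using first by simp
    next
      case (Suc j)
      then show ?thesis using IH i by simp
    qed
  qed (use len take_R in auto)
qed

lemma union_children_correct:
  assumes "length acc = N" "\<forall>c\<in>set cs. length (sc ! c) = N"
  shows "length (fst (union_children sc acc cs)) = N \<and>
    (\<forall>n<N. fst (union_children sc acc cs) ! n \<longleftrightarrow> acc ! n \<or> (\<exists>c\<in>set cs. sc ! c ! n))"
  using assms
proof (induction cs arbitrary: acc)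
  case Nil
  then show ?case by simp
next
  case (Cons c cs)
  define acc' where "acc' = map2 (\<or>) acc (sc ! c)"
  have "length acc' = N" "\<forall>n<N. acc' ! n \<longleftrightarrow> acc ! n \<or> sc ! c ! n"
    using Cons.prems by (auto simp: acc'_def)
  then show ?case
    using Cons.IH[of acc'] Cons.prems by (auto simp: split_beta or_vec_def acc'_def[symmetric])
qed

definition scope_table :: "spn \<Rightarrow> nat \<Rightarrow> bool list list" where
  "scope_table S N = fst (scopes_loop N [] S)"

lemma scope_table_correct:
  assumes "normal_spn S N" "v < length S"
  shows "length (scope_table S N ! v) = N \<and> (\<forall>n<N. scope_table S N ! v ! n \<longleftrightarrow> n \<in> scope S v)"
  using assms(2)
proof (induction v rule: less_induct)
  case (less v)
  let ?T = "take v (scope_table S N)"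
  have wf: "wf_spn S"
    using assms(1) by (simp add: normal_spn_def)
  have entry: "scope_table S N ! v = fst (node_scope N ?T (S ! v))"
    using scopes_loop_invariant[of N "[]" S] less.prems by (simp add: scope_table_def)
  have children: "length (?T ! u) = N \<and> (\<forall>n<N. ?T ! u ! n \<longleftrightarrow> n \<in> scope S u)"
    if "u \<in> set (spn_children (S ! v))" for u
    using less child_less[OF wf less.prems that] by auto
  show ?case
  proof (cases "S ! v")
    case (SumN ws)
    then show ?thesis
      using union_children_correct[of "replicate N False" N "map fst ws" ?T] children entry
        in_scope_iff[OF less.prems]
      by (auto simp: split_beta)
  next
    case (ProdN cs)
    then show ?thesis
      using union_children_correct[of "replicate N False" N cs ?T] children entry
        in_scope_iff[OF less.prems]
      by (auto simp: split_beta)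
  next
    case (DistN m p)
    moreover have "m < N"
      using DistN scope_subset_vars[OF assms(1) less.prems] in_scope_iff[OF less.prems] by auto
    ultimately show ?thesis
      using entry in_scope_iff[OF less.prems] by (auto simp: nth_list_update)
  next
    case (IndN m b)
    moreover have "m < N"
      using IndN scope_subset_vars[OF assms(1) less.prems] in_scope_iff[OF less.prems] by auto
    ultimately show ?thesis
      using entry in_scope_iff[OF less.prems] by (auto simp: nth_list_update)
  qed
qed

lemma upt_length_Cons: "[0..<length (x # xs)] = 0 # map Suc [0..<length xs]"
  by (simp add: upt_conv_Cons map_Suc_upt del: upt_Suc)

lemma he_loop_hidden:
  "fst (fst (he_loop N sc v xs)) = concat (map (\<lambda>i. hidden_of (v + i) (xs ! i)) [0..<length xs])"
proof (induction xs arbitrary: v)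
  case (Cons x xs)
  then show ?case
    unfolding upt_length_Cons by (cases x) (auto simp: split_beta o_def)
qed simp

lemma he_loop_edges:
  "snd (fst (he_loop N sc v xs)) =
     concat (map (\<lambda>i. if is_sum (xs ! i) then map (Pair (v + i)) (filter (\<lambda>n. sc ! (v + i) ! n) [0..<N])
                      else [])
               [0..<length xs])"
proof (induction xs arbitrary: v)
  case (Cons x xs)
  show ?case
    using Cons[of "Suc v"] unfolding upt_length_Cons by (cases x) (auto simp: split_beta o_def cong: if_cong)
qed simp

lemma he_loop_correct:
  assumes "normal_spn S N"
  shows "fst (fst (he_loop N (scope_table S N) 0 S)) = spec_hidden S"
    and "set (snd (fst (he_loop N (scope_table S N) 0 S))) = spec_bn_edges S"
proof -
  show "fst (fst (he_loop N (scope_table S N) 0 S)) = spec_hidden S"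
    by (simp add: he_loop_hidden spec_hidden_def)
  have "set (snd (fst (he_loop N (scope_table S N) 0 S))) =
      {(v, n). v < length S \<and> is_sum (S ! v) \<and> n < N \<and> scope_table S N ! v ! n}"
    by (auto simp: he_loop_edges split: if_splits)
  also have "\<dots> = spec_bn_edges S"
    using scope_table_correct[OF assms] scope_subset_vars[OF assms]
    unfolding spec_bn_edges_def by fastforce
  finally show "set (snd (fst (he_loop N (scope_table S N) 0 S))) = spec_bn_edges S" .
qed

section \<open>The ADDs\<close>

lemma add_loop_invariant:
  assumes "v = length im" "length es = length im"
  shows "length (fst (fst (add_loop sc n v im es xs))) = length im + length xs \<and>
   length (snd (fst (add_loop sc n v im es xs))) = length im + length xs \<and>
   take (length im) (fst (fst (add_loop sc n v im es xs))) = es \<and>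
   take (length im) (snd (fst (add_loop sc n v im es xs))) = im \<and>
   (\<forall>i<length xs. (fst (fst (add_loop sc n v im es xs)) ! (length im + i),
                    snd (fst (add_loop sc n v im es xs)) ! (length im + i)) =
       fst (add_step sc n (take (length im + i) (snd (fst (add_loop sc n v im es xs))))
              (length im + i) (xs ! i)))"
  using assms
proof (induction xs arbitrary: v im es)
  case Nil
  then show ?case by simp
next
  case (Cons x xs)
  obtain e i k where step: "add_step sc n im v x = ((e, i), k)"
    by (metis prod.exhaust)
  define E where "E = fst (fst (add_loop sc n (Suc v) (im @ [i]) (es @ [e]) xs))"
  define I where "I = snd (fst (add_loop sc n (Suc v) (im @ [i]) (es @ [e]) xs))"
  have R: "fst (fst (add_loop sc n v im es (x # xs))) = E"
      "snd (fst (add_loop sc n v im es (x # xs))) = I"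
    by (simp_all add: E_def I_def step split_beta del: add_step.simps)
  have IH: "length E = Suc (length im) + length xs \<and> length I = Suc (length im) + length xs \<and>
     take (Suc (length im)) E = es @ [e] \<and> take (Suc (length im)) I = im @ [i] \<and>
     (\<forall>j<length xs. (E ! (Suc (length im) + j), I ! (Suc (length im) + j)) =
       fst (add_step sc n (take (Suc (length im) + j) I) (Suc (length im) + j) (xs ! j)))"
    using Cons.IH[of "Suc v" "im @ [i]" "es @ [e]"] Cons.prems by (simp add: E_def I_def)
  have "take (length im) E = take (length im) (take (Suc (length im)) E)"
      "take (length im) I = take (length im) (take (Suc (length im)) I)"
      "E ! length im = take (Suc (length im)) E ! length im"
      "I ! length im = take (Suc (length im)) I ! length im"
    by simp_all
  then have prefix: "take (length im) E = es" "take (length im) I = im"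
      "E ! length im = e" "I ! length im = i"
    using IH Cons.prems by (simp_all add: nth_append)
  show ?case
    unfolding R
  proof (intro conjI allI impI)
    fix j
    assume j: "j < length (x # xs)"
    show "(E ! (length im + j), I ! (length im + j)) =
       fst (add_step sc n (take (length im + j) I) (length im + j) ((x # xs) ! j))"
    proof (cases j)
      case 0
      then show ?thesis using prefix step Cons.prems by simp
    next
      case (Suc j')
      then show ?thesis using IH j by simp
    qed
  qed (use IH prefix in auto)
qed

lemma find_child_correct:
  assumes "\<exists>c\<in>set cs. sc ! c ! n"
  shows "fst (find_child sc n cs) \<in> set cs \<and> sc ! fst (find_child sc n cs) ! n"
  using assms by (induction cs) (auto simp: split_beta)

lemma adds_list_fst: "fst (adds_list sc S ns) = map (\<lambda>n. fst (build_add sc S n)) ns"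
  by (induction ns) (auto simp: split_beta)

definition add_entry :: "spn \<Rightarrow> nat \<Rightarrow> nat \<Rightarrow> add_node option" where
  "add_entry S n v = (if n \<in> scope S v \<and> \<not> is_prod (S ! v) then Some (add_image S n v) else None)"

context
  fixes S :: spn and N :: nat
  assumes normal: "normal_spn S N"
begin

lemma wf_S: "wf_spn S"
  using normal by (simp add: normal_spn_def)

lemma img_rel_unique:
  "v < length S \<Longrightarrow> n \<in> scope S v \<Longrightarrow> \<exists>!w. img_rel S n v w"
proof (induction v rule: less_induct)
  case (less v)
  show ?case
  proof (cases "is_prod (S ! v)")
    case False
    then have "img_rel S n v w \<longleftrightarrow> w = v" for w
      by (auto intro: img_rel.keep elim: img_rel.cases)
    then show ?thesis
      by simp
  next
    case True
    then obtain cs where cs: "S ! v = ProdN cs"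
      by (cases "S ! v") auto
    obtain c where c: "c \<in> set cs" "n \<in> scope S c"
      using in_scope_iff[OF less.prems(1), of n] less.prems cs by auto
    have "c < v"
      using child_less[OF wf_S less.prems(1)] cs c by auto
    then obtain w where w: "img_rel S n c w" "\<And>w'. img_rel S n c w' \<Longrightarrow> w' = w"
      using less.IH[of c] less.prems c by (metis order.strict_trans)
    have "img_rel S n v w"
      using cs c w(1) by (auto intro: img_rel.contract)
    moreover have "w' = w" if "img_rel S n v w'" for w'
      using that
    proof cases
      case keep
      then show ?thesis using True by simp
    next
      case (contract cs' c')
      then have "c' = c"
        using prod_child_unique[OF normal less.prems(1) cs _ c(1) _ c(2)] cs by auto
      then show ?thesis
        using w(2) contract by blast
    qed
    ultimately show ?thesis
      by blast
  qed
qed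

lemma img_eqI: "v < length S \<Longrightarrow> n \<in> scope S v \<Longrightarrow> img_rel S n v w \<Longrightarrow> img S n v = w"
  unfolding img_def using img_rel_unique by (metis the1_equality)

lemma img_non_prod: "v < length S \<Longrightarrow> n \<in> scope S v \<Longrightarrow> \<not> is_prod (S ! v) \<Longrightarrow> img S n v = v"
  using img_eqI img_rel.keep by blast

lemma img_prod:
  assumes "v < length S" "S ! v = ProdN cs" "c \<in> set cs" "n \<in> scope S c"
  shows "img S n v = img S n c"
proof -
  have "c < v"
    using child_less[OF wf_S assms(1)] assms(2,3) by simp
  then have "c < length S"
    using assms(1) by simp
  then have "img_rel S n c (img S n c)"
    using img_rel_unique img_eqI assms(4) by blast
  then have "img_rel S n v (img S n c)"
    using assms by (auto intro: img_rel.contract)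
  moreover have "n \<in> scope S v"
    using in_scope_iff[OF assms(1)] assms by auto
  ultimately show ?thesis
    using img_eqI assms(1) by blast
qed

lemma add_step_correct:
  assumes v: "v < length S" and n: "n < N"
    and children: "\<And>u. u \<in> set (spn_children (S ! v)) \<Longrightarrow> n \<in> scope S u \<Longrightarrow> im ! u = img S n u"
  shows "fst (add_step (scope_table S N) n im v (S ! v)) =
           (add_entry S n v, if n \<in> scope S v then img S n v else v)"
proof -
  have table: "scope_table S N ! u ! n \<longleftrightarrow> n \<in> scope S u" if "u < length S" for u
    using scope_table_correct[OF normal that] n by blast
  have child_bound: "u < length S" if "u \<in> set (spn_children (S ! v))" for u
    using child_less[OF wf_S v that] v by simp
  show ?thesis
  proof (cases "n \<in> scope S v")
    case False
    then show ?thesis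
      using table[OF v] by (simp add: add_entry_def)
  next
    case in_scope: True
    show ?thesis
    proof (cases "S ! v")
      case (SumN ws)
      have "map (\<lambda>uw. im ! fst uw) ws = map (\<lambda>uw. img S n (fst uw)) ws"
        using children scope_of_sum_child[OF normal v SumN _ in_scope] SumN by auto
      then show ?thesis
        using table[OF v] in_scope SumN img_non_prod[OF v in_scope]
        by (simp add: add_entry_def add_image_def)
    next
      case (ProdN cs)
      define c where "c = fst (find_child (scope_table S N) n cs)"
      obtain c' where "c' \<in> set cs" "n \<in> scope S c'"
        using in_scope_iff[OF v] in_scope ProdN by auto
      then have "\<exists>c\<in>set cs. scope_table S N ! c ! n"
        using table child_bound ProdN by auto
      then have "c \<in> set cs" "scope_table S N ! c ! n"
        using find_child_correct unfolding c_def by blast+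
      then have c: "c \<in> set cs" "n \<in> scope S c"
        using table child_bound ProdN by auto
      then have "im ! c = img S n v"
        using children ProdN img_prod[OF v ProdN] by simp
      then show ?thesis
        using table[OF v] in_scope ProdN by (simp add: add_entry_def split_beta c_def)
    next
      case (DistN m p)
      then show ?thesis
        using table[OF v] in_scope img_non_prod[OF v in_scope]
        by (simp add: add_entry_def add_image_def)
    next
      case (IndN m b)
      then show ?thesis
        using normal v unfolding normal_spn_def by blast
    qed
  qed
qed

lemma add_loop_correct:
  assumes n: "n < N" and v: "v < length S"
  defines "R \<equiv> fst (add_loop (scope_table S N) n 0 [] [] S)"
  shows "fst R ! v = add_entry S n v \<and> snd R ! v = (if n \<in> scope S v then img S n v else v)"
  using v
proof (induction v rule: less_induct)
  case (less v)
  have "(fst R ! v, snd R ! v) = fst (add_step (scope_table S N) n (take v (snd R)) v (S ! v))"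
    using add_loop_invariant[of 0 "[]" "[]" "scope_table S N" n S] less.prems
    unfolding R_def by simp
  also have "\<dots> = (add_entry S n v, if n \<in> scope S v then img S n v else v)"
  proof (rule add_step_correct[OF less.prems n])
    fix u
    assume "u \<in> set (spn_children (S ! v))" "n \<in> scope S u"
    moreover have "u < v"
      using child_less[OF wf_S less.prems] calculation(1) by simp
    ultimately show "take v (snd R) ! u = img S n u"
      using less.IH[of u] less.prems by simp
  qed
  finally show ?case
    by simp
qed

lemma build_add_correct:
  assumes n: "n < N"
  shows "fst (build_add (scope_table S N) S n) = spec_add S n"
proof -
  define R where "R = fst (add_loop (scope_table S N) n 0 [] [] S)"
  have root: "spn_root S < length S" "n \<in> scope S (spn_root S)"
    using wf_S normal n by (auto simp: wf_spn_def normal_spn_def spn_root_def)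
  have "fst R = map (add_entry S n) [0..<length S]"
    using add_loop_invariant[of 0 "[]" "[]" "scope_table S N" n S] add_loop_correct[OF n]
    by (intro nth_equalityI) (simp_all add: R_def)
  moreover have "snd R ! spn_root S = img S n (spn_root S)"
    using add_loop_correct[OF n root(1)] root(2) by (simp add: R_def)
  ultimately show ?thesis
    by (simp add: build_add_def spec_add_def add_entry_def R_def split_beta spn_root_def)
qed

lemma construct_bn_correct: "is_constructed_bn S N (fst (construct_bn S N))"
  using he_loop_correct[OF normal] build_add_correct
  by (simp add: construct_bn_eq Let_def is_constructed_bn_def adds_list_fst
      scope_table_def[symmetric])

end

theorem theorem6:
  "\<exists>C::nat. \<forall>(S::spn) (N::nat). normal_spn S N \<longrightarrow>
      is_constructed_bn S N (fst (construct_bn S N)) \<and>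
      snd (construct_bn S N) \<le> C * N * spn_size S"
proof (intro exI allI impI conjI)
  fix S N
  assume normal: "normal_spn S N"
  show "is_constructed_bn S N (fst (construct_bn S N))"
    using construct_bn_correct[OF normal] .
  have "S \<noteq> []"
    using normal by (simp add: normal_spn_def wf_spn_def)
  then show "snd (construct_bn S N) \<le> 15 * N * spn_size S"
    using construct_bn_cost normal_spn_vars_pos[OF normal] by blast
qed

end
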